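(* Let $(X,U)$ be a minimizer of Problem 1 and let $(K,H,G,F)$ be the unique solution of $\begin{bmatrix} K & H \\ G & F \end{bmatrix}\begin{bmatrix} X \\ Z \end{bmatrix} = \begin{bmatrix} U \\ V \end{bmatrix}$. Fix $x_0\in\{\mathrm{e}_1,\dots,\mathrm{e}_n\}$ and let $u_{\mathcal{K}}^*=\big(u(0)^\top,\dots,u(N-1)^\top\big)^\top\in\mathbb{R}^{mN}$ be the input sequence generated by the closed loop of the plant $x(t+1)=Ax(t)+Bu(t)$, $x(0)=x_0$, with the compensator $z(t+1)=Fz(t)+Gx(t)$, $u(t)=Hz(t)+Kx(t)$, $z(0)=0$. Then $u_{\mathcal{K}}^*$ is an optimal solution $u^*$ of the open-loop $\ell_1$ optimal control problem $$\min_{u\in\mathbb{R}^{mN}}\ \sum_{t=0}^{N-1}\|u(t)\|_1\quad\text{s.t.}\quad \Phi_N u=-A^Nx_0,\quad -s\le Cx(t)+Du(t)\le s\ \ (t=0,\dots,N-1),$$ where $x(t)$ is the state generated by $u$ from $x_0$; i.e. $u^*=u_{\mathcal{K}}^*=Hz+Kx^*$.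
   Context: Plant: $x(t+1)=Ax(t)+Bu(t)$, $y(t)=Cx(t)+Du(t)$, with $x(t)\in\mathbb{R}^n$, $u(t)\in\mathbb{R}^m$ ($m\le n$), $y(t)\in\mathbb{R}^p$, $(A,B)$ reachable. $N\ge 2$ is a horizon such that the feasible sets are nonempty. $\Phi_N=[A^{N-1}B~\cdots~AB~B]\in\mathbb{R}^{n\times mN}$, assumed of full row rank $n$; the constraint $\Phi_Nu=-A^Nx_0$ is equivalent to $x(N)=0$. $\mathrm{e}_j$ denotes a standard basis vector. $P\in\mathbb{R}^{N\times N}$ is the nilpotent shift matrix $P=\begin{bmatrix}0 & 0\\ I_{N-1} & 0\end{bmatrix}$; $\otimes$ is the Kronecker product; $\|W\|_1=\sum_{i,j}|w_{ij}|$; $\mathrm{abs}(W)$ is entrywise absolute value; $\mathbf{1}_k$ is the all-ones vector of length $k$. Given $s\in\mathbb{R}^p$, Problem 1 is: minimize $\|U\|_1$ over $X\in\mathbb{R}^{n\times nN}$, $U\in\mathbb{R}^{m\times nN}$ subject to $AX+BU=X(P\otimes I_n)$, $X(\mathrm{e}_1\otimes I_n)=I_n$ ($\mathrm{e}_1\in\mathbb{R}^N$), and $\mathrm{abs}(CX+DU)\le s(\mathbf{1}_n\otimes\mathbf{1}_N)^\top$ entrywise. $Z=\begin{bmatrix}0_{n(N-1)\times n} & I_{n(N-1)}\end{bmatrix}$, $V=Z(P\otimes I_n)$. *)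

theory Defs
  imports "Jordan_Normal_Form.DL_Rank"
begin

definition kron :: "real mat \<Rightarrow> real mat \<Rightarrow> real mat" where
  "kron A B = mat (dim_row A * dim_row B) (dim_col A * dim_col B)
     (\<lambda>(i,j). A $$ (i div dim_row B, j div dim_col B) * B $$ (i mod dim_row B, j mod dim_col B))"

definition shiftP :: "nat \<Rightarrow> real mat" where
  "shiftP N = mat N N (\<lambda>(i,j). if i = j + 1 then 1 else 0)"

definition e1col :: "nat \<Rightarrow> real mat" where
  "e1col N = mat N 1 (\<lambda>(i,j). if i = 0 then 1 else 0)"

definition Zmat :: "nat \<Rightarrow> nat \<Rightarrow> real mat" where
  "Zmat n N = mat (n * (N - 1)) (n * N) (\<lambda>(i,j). if j = i + n then 1 else 0)"

definition Vmat :: "nat \<Rightarrow> nat \<Rightarrow> real mat" where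
  "Vmat n N = Zmat n N * kron (shiftP N) (1\<^sub>m n)"

definition mat_l1 :: "real mat \<Rightarrow> real" where
  "mat_l1 W = (\<Sum>i<dim_row W. \<Sum>j<dim_col W. \<bar>W $$ (i,j)\<bar>)"

(* Phi_N = [A^{N-1}B ... AB B] *)
definition PhiN :: "real mat \<Rightarrow> real mat \<Rightarrow> nat \<Rightarrow> real mat" where
  "PhiN A B N = mat (dim_row A) (dim_col B * N)
     (\<lambda>(i,j). ((A ^\<^sub>m (N - 1 - j div dim_col B)) * B) $$ (i, j mod dim_col B))"

definition reachable :: "real mat \<Rightarrow> real mat \<Rightarrow> bool" where
  "reachable A B = (vec_space.rank (dim_row A)
      (mat (dim_row A) (dim_col B * dim_row A)
        (\<lambda>(i,j). ((A ^\<^sub>m (j div dim_col B)) * B) $$ (i, j mod dim_col B))) = dim_row A)"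

definition problem1_feasible ::
  "real mat \<Rightarrow> real mat \<Rightarrow> real mat \<Rightarrow> real mat \<Rightarrow> real vec \<Rightarrow> nat \<Rightarrow> real mat \<Rightarrow> real mat \<Rightarrow> bool" where
  "problem1_feasible A B C D s N X U =
    (let n = dim_row A; m = dim_col B; p = dim_row C in
       X \<in> carrier_mat n (n * N) \<and> U \<in> carrier_mat m (n * N) \<and>
       A * X + B * U = X * kron (shiftP N) (1\<^sub>m n) \<and>
       X * kron (e1col N) (1\<^sub>m n) = 1\<^sub>m n \<and>
       (\<forall>i<p. \<forall>j<n * N. \<bar>(C * X + D * U) $$ (i,j)\<bar> \<le> s $ i))"

definition problem1_minimizer ::
  "real mat \<Rightarrow> real mat \<Rightarrow> real mat \<Rightarrow> real mat \<Rightarrow> real vec \<Rightarrow> nat \<Rightarrow> real mat \<Rightarrow> real mat \<Rightarrow> bool" where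
  "problem1_minimizer A B C D s N X U =
    (problem1_feasible A B C D s N X U \<and>
     (\<forall>X' U'. problem1_feasible A B C D s N X' U' \<longrightarrow> mat_l1 U \<le> mat_l1 U'))"

definition ublock :: "nat \<Rightarrow> real vec \<Rightarrow> nat \<Rightarrow> real vec" where
  "ublock m u t = vec m (\<lambda>i. u $ (m * t + i))"

fun ol_state :: "real mat \<Rightarrow> real mat \<Rightarrow> real vec \<Rightarrow> real vec \<Rightarrow> nat \<Rightarrow> real vec" where
  "ol_state A B x0 u 0 = x0"
| "ol_state A B x0 u (Suc t) = A *\<^sub>v ol_state A B x0 u t + B *\<^sub>v ublock (dim_col B) u t"

definition ol_feasible ::
  "real mat \<Rightarrow> real mat \<Rightarrow> real mat \<Rightarrow> real mat \<Rightarrow> real vec \<Rightarrow> nat \<Rightarrow> real vec \<Rightarrow> real vec \<Rightarrow> bool" where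
  "ol_feasible A B C D s N x0 u =
    (u \<in> carrier_vec (dim_col B * N) \<and>
     PhiN A B N *\<^sub>v u = - ((A ^\<^sub>m N) *\<^sub>v x0) \<and>
     (\<forall>t<N. \<forall>i<dim_row C.
        - (s $ i) \<le> (C *\<^sub>v ol_state A B x0 u t + D *\<^sub>v ublock (dim_col B) u t) $ i \<and>
        (C *\<^sub>v ol_state A B x0 u t + D *\<^sub>v ublock (dim_col B) u t) $ i \<le> s $ i))"

definition ol_cost :: "nat \<Rightarrow> nat \<Rightarrow> real vec \<Rightarrow> real" where
  "ol_cost m N u = (\<Sum>t<N. \<Sum>i<m. \<bar>u $ (m * t + i)\<bar>)"

definition ol_optimal ::
  "real mat \<Rightarrow> real mat \<Rightarrow> real mat \<Rightarrow> real mat \<Rightarrow> real vec \<Rightarrow> nat \<Rightarrow> real vec \<Rightarrow> real vec \<Rightarrow> bool" where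
  "ol_optimal A B C D s N x0 u =
    (ol_feasible A B C D s N x0 u \<and>
     (\<forall>u'. ol_feasible A B C D s N x0 u' \<longrightarrow> ol_cost (dim_col B) N u \<le> ol_cost (dim_col B) N u'))"

fun cl_state :: "real mat \<Rightarrow> real mat \<Rightarrow> real mat \<Rightarrow> real mat \<Rightarrow> real mat \<Rightarrow> real mat \<Rightarrow> real vec
                  \<Rightarrow> nat \<Rightarrow> real vec \<times> real vec" where
  "cl_state A B K H G F x0 0 = (x0, 0\<^sub>v (dim_row F))"
| "cl_state A B K H G F x0 (Suc t) =
     (let x = fst (cl_state A B K H G F x0 t); z = snd (cl_state A B K H G F x0 t);
          u = H *\<^sub>v z + K *\<^sub>v x
      in (A *\<^sub>v x + B *\<^sub>v u, F *\<^sub>v z + G *\<^sub>v x))"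

definition cl_input :: "real mat \<Rightarrow> real mat \<Rightarrow> real mat \<Rightarrow> real mat \<Rightarrow> real mat \<Rightarrow> real mat \<Rightarrow> real vec
                  \<Rightarrow> nat \<Rightarrow> real vec" where
  "cl_input A B K H G F x0 t =
     H *\<^sub>v snd (cl_state A B K H G F x0 t) + K *\<^sub>v fst (cl_state A B K H G F x0 t)"

definition cl_input_seq :: "real mat \<Rightarrow> real mat \<Rightarrow> real mat \<Rightarrow> real mat \<Rightarrow> real mat \<Rightarrow> real mat \<Rightarrow> real vec
                  \<Rightarrow> nat \<Rightarrow> real vec" where
  "cl_input_seq A B K H G F x0 N =
     vec (dim_col B * N) (\<lambda>k. cl_input A B K H G F x0 (k div dim_col B) $ (k mod dim_col B))"

end

theory Submission
  imports Defs
begin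

text \<open>
  Problem 1 decouples along the slices of columns \<open>n t + k\<close> (\<open>t < N\<close>): for each \<open>k\<close> these
  columns of a feasible pair \<open>(X, U)\<close> are a state/input trajectory of the plant from \<open>e\<^sub>k\<close> that
  reaches \<open>0\<close> at time \<open>N\<close> and respects the output bounds, and \<open>\<parallel>U\<parallel>\<^sub>1\<close> is the sum of the
  input costs of these \<open>n\<close> trajectories. Replacing one slice by any other feasible trajectory
  keeps \<open>(X, U)\<close> feasible, so in a minimizer every slice is an optimal open-loop input.
  The defining equations of \<open>(K, H, G, F)\<close> say exactly that the compensator, started from
  \<open>z(0) = 0\<close>, steps from column \<open>n t + i\<close> of \<open>X\<close> and \<open>Z\<close> to column \<open>n (t + 1) + i\<close>, so its
  closed-loop input is the \<open>i\<close>-th slice of \<open>U\<close>.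
\<close>

lemma mult_block_less_iff:
  fixes n N t k :: nat
  assumes "k < n"
  shows "n * t + k < n * N \<longleftrightarrow> t < N"
proof
  assume "t < N"
  hence "n * Suc t \<le> n * N" by (intro mult_le_mono2) simp
  thus "n * t + k < n * N" using assms by simp
next
  assume "n * t + k < n * N"
  thus "t < N" by (metis add_lessD1 mult_less_cancel1)
qed

lemma all_less_mult_iff_blocks:
  fixes n N :: nat
  shows "(\<forall>j<n * N. P j) \<longleftrightarrow> (\<forall>k<n. \<forall>t<N. P (n * t + k))"
proof
  assume "\<forall>j<n * N. P j"
  thus "\<forall>k<n. \<forall>t<N. P (n * t + k)" using mult_block_less_iff by blast
next
  assume blocks: "\<forall>k<n. \<forall>t<N. P (n * t + k)"
  show "\<forall>j<n * N. P j"
  proof (intro allI impI)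
    fix j assume j: "j < n * N"
    hence "n > 0" by (cases n) auto
    hence "j div n < N" "j mod n < n" using j by (auto simp: less_mult_imp_div_less mult.commute)
    thus "P j" using blocks by (metis div_mult_mod_eq mult.commute)
  qed
qed

lemma sum_less_mult_blocks:
  fixes f :: "nat \<Rightarrow> 'a::comm_monoid_add"
  shows "(\<Sum>j<n * N. f j) = (\<Sum>k<n. \<Sum>t<N. f (n * t + k))"
proof -
  have "(\<Sum>j<n * N. f j) = (\<Sum>t<N. sum f {t * n..<t * n + n})"
    by (simp add: sum.nat_group mult.commute)
  also have "\<dots> = (\<Sum>t<N. \<Sum>k<n. f (n * t + k))"
  proof (rule sum.cong[OF refl])
    fix t
    have "sum f {t * n..<t * n + n} = (\<Sum>k = 0..<n. f (k + t * n))"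
      using sum.shift_bounds_nat_ivl[of f 0 "t * n" n] by (simp add: add.commute)
    thus "sum f {t * n..<t * n + n} = (\<Sum>k<n. f (n * t + k))"
      by (simp add: atLeast0LessThan algebra_simps)
  qed
  also have "\<dots> = (\<Sum>k<n. \<Sum>t<N. f (n * t + k))" by (rule sum.swap)
  finally show ?thesis .
qed

lemma mat_eq_iff_cols:
  assumes "M \<in> carrier_mat r c" "M' \<in> carrier_mat r c"
  shows "M = M' \<longleftrightarrow> (\<forall>j<c. col M j = col M' j)"
  using assms by (auto intro: mat_col_eqI)

lemma kron_shift_carrier: "kron (shiftP N) (1\<^sub>m n) \<in> carrier_mat (n * N) (n * N)"
  by (simp add: kron_def shiftP_def mult.commute)

lemma kron_e1_carrier: "kron (e1col N) (1\<^sub>m n) \<in> carrier_mat (n * N) n"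
  by (simp add: kron_def e1col_def mult.commute)

lemma kron_shift_index:
  assumes l: "l < n * N" and j: "j < n * N"
  shows "kron (shiftP N) (1\<^sub>m n) $$ (l, j) = (if l = j + n then 1 else 0)"
proof -
  have n: "n > 0" using j by (cases n) auto
  have "l div n < N" "j div n < N" using l j n by (auto simp: less_mult_imp_div_less mult.commute)
  moreover have "(l div n = j div n + 1 \<and> l mod n = j mod n) \<longleftrightarrow> l = j + n"
    using n by (metis div_mult_mod_eq mod_add_self2 div_add_self2 less_not_refl2)
  ultimately show ?thesis using l j n by (auto simp: kron_def shiftP_def mult.commute)
qed

lemma kron_e1_index:
  assumes l: "l < n * N" and k: "k < n"
  shows "kron (e1col N) (1\<^sub>m n) $$ (l, k) = (if l = k then 1 else 0)"
proof -
  have "l div n = 0 \<longleftrightarrow> l < n" using k by (simp add: div_eq_0_iff)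
  moreover have "l < n \<Longrightarrow> l mod n = l" by simp
  ultimately show ?thesis using l k by (auto simp: kron_def e1col_def mult.commute less_mult_imp_div_less)
qed

lemma col_mult_selecting:
  fixes M Q :: "'a::semiring_1 mat"
  assumes M: "M \<in> carrier_mat r c" and Q: "Q \<in> carrier_mat c d" and j: "j < d"
    and Qj: "\<And>l. l < c \<Longrightarrow> Q $$ (l, j) = (if l = l0 then 1 else 0)"
  shows "col (M * Q) j = (if l0 < c then col M l0 else 0\<^sub>v r)"
proof (rule eq_vecI)
  fix a assume "a < dim_vec (if l0 < c then col M l0 else 0\<^sub>v r)"
  hence a: "a < r" using M by (auto split: if_splits)
  have "col (M * Q) j $ a = (\<Sum>l<c. M $$ (a, l) * Q $$ (l, j))"
    using M Q a j by (simp add: scalar_prod_def atLeast0LessThan)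
  also have "\<dots> = (\<Sum>l<c. if l = l0 then M $$ (a, l) else 0)"
    using Qj by (intro sum.cong) auto
  finally show "col (M * Q) j $ a = (if l0 < c then col M l0 else 0\<^sub>v r) $ a"
    using M a by (simp add: sum.delta')
qed (use M Q in auto)

lemma col_mult_kron_shift:
  assumes "M \<in> carrier_mat r (n * N)" "j < n * N"
  shows "col (M * kron (shiftP N) (1\<^sub>m n)) j = (if j + n < n * N then col M (j + n) else 0\<^sub>v r)"
  using assms kron_shift_index by (intro col_mult_selecting[OF _ kron_shift_carrier]) auto

lemma col_mult_kron_e1:
  assumes "M \<in> carrier_mat r (n * N)" "k < n" "N > 0"
  shows "col (M * kron (e1col N) (1\<^sub>m n)) k = col M k"
proof -
  have "k < n * N" using mult_block_less_iff[of k n 0 N] assms by simp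
  thus ?thesis using assms kron_e1_index
    by (subst col_mult_selecting[OF _ kron_e1_carrier]) auto
qed

lemma pow_mat_Suc_left:
  assumes A: "A \<in> carrier_mat n n"
  shows "A ^\<^sub>m Suc k = A * A ^\<^sub>m k"
proof (induction k)
  case (Suc k)
  have "A ^\<^sub>m Suc (Suc k) = (A * A ^\<^sub>m k) * A" using Suc by simp
  also have "\<dots> = A * (A ^\<^sub>m k * A)" using A by (simp add: assoc_mult_mat[of _ n n _ n _ n])
  finally show ?case by simp
qed (use A in simp)

lemma pow_mat_Suc_mult_vec:
  assumes A: "A \<in> carrier_mat n n" and v: "v \<in> carrier_vec n"
  shows "A ^\<^sub>m Suc k *\<^sub>v v = A *\<^sub>v (A ^\<^sub>m k *\<^sub>v v)"
proof -
  have "A ^\<^sub>m Suc k *\<^sub>v v = (A * A ^\<^sub>m k) *\<^sub>v v" by (simp only: pow_mat_Suc_left[OF A])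
  thus ?thesis using A v by (simp add: assoc_mult_mat_vec[of _ n n _ n])
qed

definition vec_sum :: "nat \<Rightarrow> ('b \<Rightarrow> 'a::comm_monoid_add vec) \<Rightarrow> 'b set \<Rightarrow> 'a vec" where
  "vec_sum n f S = vec n (\<lambda>a. \<Sum>s\<in>S. f s $ a)"

lemma vec_sum_carrier [simp]: "vec_sum n f S \<in> carrier_vec n"
  by (simp add: vec_sum_def)

lemma mult_mat_vec_sum:
  fixes M :: "'a::comm_semiring_0 mat"
  assumes M: "M \<in> carrier_mat r n" and f: "\<And>s. s \<in> S \<Longrightarrow> f s \<in> carrier_vec n"
  shows "M *\<^sub>v vec_sum n f S = vec_sum r (\<lambda>s. M *\<^sub>v f s) S"
proof (rule eq_vecI)
  fix a assume "a < dim_vec (vec_sum r (\<lambda>s. M *\<^sub>v f s) S)"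
  hence a: "a < r" by (simp add: vec_sum_def)
  have "(M *\<^sub>v vec_sum n f S) $ a = (\<Sum>b<n. M $$ (a, b) * (\<Sum>s\<in>S. f s $ b))"
    using M a by (simp add: vec_sum_def scalar_prod_def atLeast0LessThan)
  also have "\<dots> = (\<Sum>s\<in>S. \<Sum>b<n. M $$ (a, b) * f s $ b)"
    unfolding sum_distrib_left by (rule sum.swap)
  also have "\<dots> = (\<Sum>s\<in>S. (M *\<^sub>v f s) $ a)"
    using M a by (intro sum.cong) (auto dest!: f simp: scalar_prod_def atLeast0LessThan)
  finally show "(M *\<^sub>v vec_sum n f S) $ a = vec_sum r (\<lambda>s. M *\<^sub>v f s) S $ a"
    using a by (simp add: vec_sum_def)
qed (use M in \<open>simp add: vec_sum_def\<close>)

lemma ublock_carrier [simp]: "ublock m u t \<in> carrier_vec m"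
  by (simp add: ublock_def)

lemma ol_state_carrier:
  assumes "A \<in> carrier_mat n n" "B \<in> carrier_mat n m" "x0 \<in> carrier_vec n"
  shows "ol_state A B x0 u t \<in> carrier_vec n"
  by (induction t) (use assms in auto)

lemma ol_state_eq_vec_sum:
  assumes A: "A \<in> carrier_mat n n" and B: "B \<in> carrier_mat n m" and x0: "x0 \<in> carrier_vec n"
  shows "ol_state A B x0 u t =
    A ^\<^sub>m t *\<^sub>v x0 + vec_sum n (\<lambda>s. A ^\<^sub>m (t - 1 - s) *\<^sub>v (B *\<^sub>v ublock m u s)) {..<t}"
proof (induction t)
  case 0
  show ?case using A x0 by (intro eq_vecI) (auto simp: vec_sum_def)
next
  case (Suc t)
  define w where "w s = B *\<^sub>v ublock m u s" for s
  have w: "w s \<in> carrier_vec n" for s using B by (simp add: w_def)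
  have "ol_state A B x0 u (Suc t) =
      A *\<^sub>v (A ^\<^sub>m t *\<^sub>v x0 + vec_sum n (\<lambda>s. A ^\<^sub>m (t - 1 - s) *\<^sub>v w s) {..<t}) + w t"
    using Suc B by (simp add: w_def)
  also have "\<dots> = A *\<^sub>v (A ^\<^sub>m t *\<^sub>v x0) + A *\<^sub>v vec_sum n (\<lambda>s. A ^\<^sub>m (t - 1 - s) *\<^sub>v w s) {..<t} + w t"
    using A w mult_mat_vec_carrier[OF pow_carrier_mat[OF A] x0]
    by (subst mult_add_distrib_mat_vec[of _ n n]) (auto simp: vec_sum_def)
  also have "\<dots> = A ^\<^sub>m Suc t *\<^sub>v x0 + vec_sum n (\<lambda>s. A *\<^sub>v (A ^\<^sub>m (t - 1 - s) *\<^sub>v w s)) {..<t} + w t"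
  proof -
    have "A *\<^sub>v vec_sum n (\<lambda>s. A ^\<^sub>m (t - 1 - s) *\<^sub>v w s) {..<t}
        = vec_sum n (\<lambda>s. A *\<^sub>v (A ^\<^sub>m (t - 1 - s) *\<^sub>v w s)) {..<t}"
      using w by (intro mult_mat_vec_sum[OF A] mult_mat_vec_carrier[OF pow_carrier_mat[OF A]])
    thus ?thesis using pow_mat_Suc_mult_vec[OF A x0] by simp
  qed
  also have "\<dots> = A ^\<^sub>m Suc t *\<^sub>v x0 + vec_sum n (\<lambda>s. A ^\<^sub>m (Suc t - 1 - s) *\<^sub>v w s) {..<Suc t}"
  proof -
    have "A *\<^sub>v (A ^\<^sub>m (t - 1 - s) *\<^sub>v w s) = A ^\<^sub>m (Suc t - 1 - s) *\<^sub>v w s" if "s < t" for s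
    proof -
      have "Suc t - 1 - s = Suc (t - 1 - s)" using that by simp
      thus ?thesis using pow_mat_Suc_mult_vec[OF A w] by presburger
    qed
    hence "vec_sum n (\<lambda>s. A *\<^sub>v (A ^\<^sub>m (t - 1 - s) *\<^sub>v w s)) {..<t} + w t
        = vec_sum n (\<lambda>s. A ^\<^sub>m (Suc t - 1 - s) *\<^sub>v w s) {..<Suc t}"
      using A w by (intro eq_vecI) (auto simp: vec_sum_def carrier_vecD[OF w])
    thus ?thesis
      by (metis assoc_add_vec[OF mult_mat_vec_carrier[OF pow_carrier_mat[OF A] x0] vec_sum_carrier w])
  qed
  finally show ?case by (simp add: w_def)
qed

lemma PhiN_mult_vec_eq_vec_sum:
  assumes A: "A \<in> carrier_mat n n" and B: "B \<in> carrier_mat n m" and u: "u \<in> carrier_vec (m * N)"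
  shows "PhiN A B N *\<^sub>v u = vec_sum n (\<lambda>s. A ^\<^sub>m (N - 1 - s) *\<^sub>v (B *\<^sub>v ublock m u s)) {..<N}"
proof (rule eq_vecI)
  fix a assume "a < dim_vec (vec_sum n (\<lambda>s. A ^\<^sub>m (N - 1 - s) *\<^sub>v (B *\<^sub>v ublock m u s)) {..<N})"
  hence a: "a < n" by (simp add: vec_sum_def)
  have "(PhiN A B N *\<^sub>v u) $ a = (\<Sum>j<m * N. (A ^\<^sub>m (N - 1 - j div m) * B) $$ (a, j mod m) * u $ j)"
    using A B u a by (simp add: PhiN_def scalar_prod_def atLeast0LessThan)
  also have "\<dots> = (\<Sum>s<N. \<Sum>k<m. (A ^\<^sub>m (N - 1 - s) * B) $$ (a, k) * u $ (m * s + k))"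
    by (simp add: sum_less_mult_blocks sum.swap[of _ "{..<m}"])
  also have "\<dots> = (\<Sum>s<N. (A ^\<^sub>m (N - 1 - s) *\<^sub>v (B *\<^sub>v ublock m u s)) $ a)"
    using A B a by (intro sum.cong)
      (auto simp: assoc_mult_mat_vec[of _ n n _ m, symmetric] scalar_prod_def atLeast0LessThan ublock_def)
  finally show "(PhiN A B N *\<^sub>v u) $ a = vec_sum n (\<lambda>s. A ^\<^sub>m (N - 1 - s) *\<^sub>v (B *\<^sub>v ublock m u s)) {..<N} $ a"
    using a by (simp add: vec_sum_def)
qed (use A in \<open>simp add: vec_sum_def PhiN_def\<close>)

lemma ol_state_horizon:
  assumes "A \<in> carrier_mat n n" "B \<in> carrier_mat n m" "x0 \<in> carrier_vec n" "u \<in> carrier_vec (m * N)"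
  shows "ol_state A B x0 u N = A ^\<^sub>m N *\<^sub>v x0 + PhiN A B N *\<^sub>v u"
  using ol_state_eq_vec_sum[OF assms(1-3)] PhiN_mult_vec_eq_vec_sum[OF assms(1,2,4)] by simp

lemma add_vec_eq_zero_iff:
  fixes v w :: "'a::ab_group_add vec"
  assumes "v \<in> carrier_vec n" "w \<in> carrier_vec n"
  shows "v + w = 0\<^sub>v n \<longleftrightarrow> w = - v"
proof
  assume "v + w = 0\<^sub>v n"
  hence "v $ i + w $ i = 0" if "i < n" for i
    using assms that by (metis carrier_vecD index_add_vec(1) index_zero_vec(1))
  thus "w = - v" using assms by (intro eq_vecI) (auto simp: add_eq_0_iff)
qed (use assms in \<open>auto intro!: eq_vecI\<close>)

definition traj_feasible ::
  "real mat \<Rightarrow> real mat \<Rightarrow> real mat \<Rightarrow> real mat \<Rightarrow> real vec \<Rightarrow> nat \<Rightarrow> real vec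
    \<Rightarrow> (nat \<Rightarrow> real vec) \<Rightarrow> (nat \<Rightarrow> real vec) \<Rightarrow> bool" where
  "traj_feasible A B C D s N x0 x u \<longleftrightarrow>
     x 0 = x0 \<and> x N = 0\<^sub>v (dim_row A) \<and>
     (\<forall>t<N. x (Suc t) = A *\<^sub>v x t + B *\<^sub>v u t \<and>
        (\<forall>a<dim_row C. \<bar>(C *\<^sub>v x t + D *\<^sub>v u t) $ a\<bar> \<le> s $ a))"

lemma traj_feasible_cong:
  assumes "traj_feasible A B C D s N x0 x u"
    and "\<And>t. t \<le> N \<Longrightarrow> x' t = x t" and "\<And>t. t < N \<Longrightarrow> u' t = u t"
  shows "traj_feasible A B C D s N x0 x' u'"
  using assms by (simp add: traj_feasible_def)

lemma ol_feasible_iff_traj_feasible: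
  assumes A: "A \<in> carrier_mat n n" and B: "B \<in> carrier_mat n m" and x0: "x0 \<in> carrier_vec n"
  shows "ol_feasible A B C D s N x0 u \<longleftrightarrow>
    u \<in> carrier_vec (m * N) \<and> traj_feasible A B C D s N x0 (ol_state A B x0 u) (ublock m u)"
proof (cases "u \<in> carrier_vec (m * N)")
  case u: True
  have "PhiN A B N *\<^sub>v u \<in> carrier_vec n" using A by (simp add: PhiN_def carrier_vecI)
  moreover have "A ^\<^sub>m N *\<^sub>v x0 \<in> carrier_vec n" using A x0 by (intro mult_mat_vec_carrier) auto
  ultimately have "PhiN A B N *\<^sub>v u = - (A ^\<^sub>m N *\<^sub>v x0) \<longleftrightarrow> ol_state A B x0 u N = 0\<^sub>v n"
    unfolding ol_state_horizon[OF A B x0 u] by (simp add: add_vec_eq_zero_iff)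
  moreover have "dim_row A = n" "dim_col B = m" using A B by auto
  ultimately show ?thesis using u
    unfolding ol_feasible_def traj_feasible_def abs_le_iff ol_state.simps(2) by (auto simp: minus_le_iff)
next
  case False
  thus ?thesis using B by (simp add: ol_feasible_def)
qed

lemma traj_feasible_ol_state:
  assumes B: "dim_col B = m" and traj: "traj_feasible A B C D s N x0 x v"
    and u: "\<And>t. t < N \<Longrightarrow> ublock m u t = v t"
  shows "traj_feasible A B C D s N x0 (ol_state A B x0 u) (ublock m u)"
proof (rule traj_feasible_cong[OF traj])
  show "ol_state A B x0 u t = x t" if "t \<le> N" for t
    using that
  proof (induction t)
    case 0
    show ?case using traj by (simp add: traj_feasible_def)
  next
    case (Suc t)
    thus ?case using traj u B by (simp add: traj_feasible_def)
  qed
qed (rule u)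

text \<open>The state at time \<open>N\<close> is not a column of \<open>X\<close>: the shift structure of Problem 1 forces it
  to be \<open>0\<close>.\<close>

definition slice_state :: "nat \<Rightarrow> nat \<Rightarrow> real mat \<Rightarrow> nat \<Rightarrow> nat \<Rightarrow> real vec" where
  "slice_state n N X k t = (if t < N then col X (n * t + k) else 0\<^sub>v (dim_row X))"

definition slice_input :: "nat \<Rightarrow> real mat \<Rightarrow> nat \<Rightarrow> nat \<Rightarrow> real vec" where
  "slice_input n U k t = col U (n * t + k)"

lemma plant_eq_iff_slices:
  assumes A: "A \<in> carrier_mat n n" and B: "B \<in> carrier_mat n m"
    and X: "X \<in> carrier_mat n (n * N)" and U: "U \<in> carrier_mat m (n * N)"
  shows "A * X + B * U = X * kron (shiftP N) (1\<^sub>m n) \<longleftrightarrow>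
    (\<forall>k<n. \<forall>t<N. slice_state n N X k (Suc t) =
       A *\<^sub>v slice_state n N X k t + B *\<^sub>v slice_input n U k t)"
proof -
  have "A * X + B * U = X * kron (shiftP N) (1\<^sub>m n) \<longleftrightarrow>
      (\<forall>j<n * N. A *\<^sub>v col X j + B *\<^sub>v col U j = (if j + n < n * N then col X (j + n) else 0\<^sub>v n))"
    using A B X U kron_shift_carrier
    by (simp add: mat_eq_iff_cols[of _ n "n * N"] col_mult_kron_shift col_mult2[OF A X] col_mult2[OF B U]
        col_add[OF mult_carrier_mat[OF A X] mult_carrier_mat[OF B U]] del: col_mult)
  moreover have "(A *\<^sub>v col X (n * t + k) + B *\<^sub>v col U (n * t + k) =
        (if n * t + k + n < n * N then col X (n * t + k + n) else 0\<^sub>v n)) \<longleftrightarrow>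
      slice_state n N X k (Suc t) = A *\<^sub>v slice_state n N X k t + B *\<^sub>v slice_input n U k t"
    if "k < n" "t < N" for k t
    using X that mult_block_less_iff[of k n "Suc t" N]
    by (auto simp: slice_state_def slice_input_def add.commute add.left_commute)
  ultimately show ?thesis unfolding all_less_mult_iff_blocks by simp
qed

lemma problem1_feasible_iff_slices:
  assumes A: "A \<in> carrier_mat n n" and B: "B \<in> carrier_mat n m"
    and C: "C \<in> carrier_mat p n" and D: "D \<in> carrier_mat p m" and N: "N > 0"
  shows "problem1_feasible A B C D s N X U \<longleftrightarrow>
    X \<in> carrier_mat n (n * N) \<and> U \<in> carrier_mat m (n * N) \<and>
    (\<forall>k<n. traj_feasible A B C D s N (unit_vec n k) (slice_state n N X k) (slice_input n U k))"
proof (cases "X \<in> carrier_mat n (n * N) \<and> U \<in> carrier_mat m (n * N)")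
  case True
  hence X: "X \<in> carrier_mat n (n * N)" and U: "U \<in> carrier_mat m (n * N)" by auto
  let ?x = "slice_state n N X" and ?u = "slice_input n U"
  note dyn = plant_eq_iff_slices[OF A B X U]
  have "X * kron (e1col N) (1\<^sub>m n) = 1\<^sub>m n \<longleftrightarrow> (\<forall>k<n. col X k = unit_vec n k)"
    using X N kron_e1_carrier by (simp add: mat_eq_iff_cols[of _ n n] col_mult_kron_e1)
  hence init: "X * kron (e1col N) (1\<^sub>m n) = 1\<^sub>m n \<longleftrightarrow> (\<forall>k<n. ?x k 0 = unit_vec n k)"
    using N by (simp add: slice_state_def)
  have "(\<forall>a<p. \<forall>j<n * N. \<bar>(C * X + D * U) $$ (a, j)\<bar> \<le> s $ a) \<longleftrightarrow>
      (\<forall>j<n * N. \<forall>a<p. \<bar>(C *\<^sub>v col X j + D *\<^sub>v col U j) $ a\<bar> \<le> s $ a)"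
    using C D X U by auto
  also have "\<dots> \<longleftrightarrow> (\<forall>k<n. \<forall>t<N. \<forall>a<p. \<bar>(C *\<^sub>v ?x k t + D *\<^sub>v ?u k t) $ a\<bar> \<le> s $ a)"
    unfolding all_less_mult_iff_blocks by (simp add: slice_state_def slice_input_def)
  finally have bounds: "(\<forall>a<p. \<forall>j<n * N. \<bar>(C * X + D * U) $$ (a, j)\<bar> \<le> s $ a) \<longleftrightarrow>
      (\<forall>k<n. \<forall>t<N. \<forall>a<p. \<bar>(C *\<^sub>v ?x k t + D *\<^sub>v ?u k t) $ a\<bar> \<le> s $ a)" .
  have terminal: "?x k N = 0\<^sub>v n" for k using X by (simp add: slice_state_def)
  have dims: "dim_row A = n" "dim_col B = m" "dim_row C = p" using A B C by auto
  show ?thesis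
    unfolding problem1_feasible_def traj_feasible_def Let_def dims dyn init bounds
    using X U by (auto simp: terminal)
next
  case False
  thus ?thesis using A B by (auto simp: problem1_feasible_def)
qed

definition seq_cost :: "nat \<Rightarrow> nat \<Rightarrow> (nat \<Rightarrow> real vec) \<Rightarrow> real" where
  "seq_cost m N v = (\<Sum>t<N. \<Sum>a<m. \<bar>v t $ a\<bar>)"

lemma seq_cost_cong: "(\<And>t. t < N \<Longrightarrow> v t = w t) \<Longrightarrow> seq_cost m N v = seq_cost m N w"
  by (simp add: seq_cost_def)

lemma ol_cost_eq_seq_cost: "ol_cost m N u = seq_cost m N (ublock m u)"
  by (simp add: ol_cost_def seq_cost_def ublock_def)

lemma mat_l1_eq_sum_seq_cost:
  assumes W: "W \<in> carrier_mat m (n * N)"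
  shows "mat_l1 W = (\<Sum>k<n. seq_cost m N (slice_input n W k))"
proof -
  have "mat_l1 W = (\<Sum>a<m. \<Sum>k<n. \<Sum>t<N. \<bar>W $$ (a, n * t + k)\<bar>)"
    using W by (simp add: mat_l1_def sum_less_mult_blocks)
  also have "\<dots> = (\<Sum>k<n. \<Sum>t<N. \<Sum>a<m. \<bar>W $$ (a, n * t + k)\<bar>)"
    by (simp add: sum.swap[of _ "{..<m}"])
  also have "\<dots> = (\<Sum>k<n. seq_cost m N (slice_input n W k))"
    using W mult_block_less_iff by (simp add: seq_cost_def slice_input_def)
  finally show ?thesis .
qed

definition replace_slice :: "nat \<Rightarrow> nat \<Rightarrow> real mat \<Rightarrow> (nat \<Rightarrow> real vec) \<Rightarrow> real mat" where
  "replace_slice n i W w = mat (dim_row W) (dim_col W)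
     (\<lambda>(a, j). if j mod n = i then w (j div n) $ a else W $$ (a, j))"

lemma replace_slice_carrier: "W \<in> carrier_mat r c \<Longrightarrow> replace_slice n i W w \<in> carrier_mat r c"
  by (simp add: replace_slice_def)

lemma col_replace_slice:
  assumes W: "W \<in> carrier_mat r (n * N)" and w: "\<And>t. w t \<in> carrier_vec r"
    and k: "k < n" and t: "t < N"
  shows "col (replace_slice n i W w) (n * t + k) = (if k = i then w t else col W (n * t + k))"
  using W w[THEN carrier_vecD] k t mult_block_less_iff[OF k]
  by (intro eq_vecI) (auto simp: replace_slice_def)

lemma slice_state_replace_slice:
  assumes "W \<in> carrier_mat r (n * N)" "\<And>t. w t \<in> carrier_vec r" "k < n"
  shows "slice_state n N (replace_slice n i W w) k t =
    (if k = i \<and> t < N then w t else slice_state n N W k t)"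
proof (cases "t < N")
  case True
  thus ?thesis using col_replace_slice[OF assms True] by (simp add: slice_state_def)
next
  case False
  thus ?thesis using assms by (simp add: slice_state_def replace_slice_def)
qed

lemma slice_input_replace_slice:
  assumes "W \<in> carrier_mat r (n * N)" "\<And>t. w t \<in> carrier_vec r" "k < n" "t < N"
  shows "slice_input n (replace_slice n i W w) k t = (if k = i then w t else slice_input n W k t)"
  using col_replace_slice[OF assms] by (simp add: slice_input_def)

lemma problem1_feasible_replace_slice:
  assumes A: "A \<in> carrier_mat n n" and B: "B \<in> carrier_mat n m"
    and C: "C \<in> carrier_mat p n" and D: "D \<in> carrier_mat p m" and N: "N > 0"
    and feas: "problem1_feasible A B C D s N X U" and i: "i < n"
    and traj: "traj_feasible A B C D s N (unit_vec n i) x v"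
    and x: "\<And>t. x t \<in> carrier_vec n" and v: "\<And>t. v t \<in> carrier_vec m"
  shows "problem1_feasible A B C D s N (replace_slice n i X x) (replace_slice n i U v)"
proof -
  note slices = problem1_feasible_iff_slices[OF A B C D N]
  have X: "X \<in> carrier_mat n (n * N)" and U: "U \<in> carrier_mat m (n * N)"
    and trajs: "\<And>k. k < n \<Longrightarrow>
      traj_feasible A B C D s N (unit_vec n k) (slice_state n N X k) (slice_input n U k)"
    using feas unfolding slices by auto
  have "traj_feasible A B C D s N (unit_vec n k)
      (slice_state n N (replace_slice n i X x) k) (slice_input n (replace_slice n i U v) k)"
    if k: "k < n" for k
  proof (cases "k = i")
    case True
    have "x N = 0\<^sub>v n" using traj A by (simp add: traj_feasible_def)
    hence "slice_state n N (replace_slice n i X x) i t = x t" if "t \<le> N" for t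
      using that X by (subst slice_state_replace_slice[OF X x i]) (auto simp: slice_state_def)
    thus ?thesis
      using True traj by (auto intro: traj_feasible_cong simp: slice_input_replace_slice[OF U v i])
  next
    case False
    thus ?thesis using trajs[OF k]
      by (auto intro: traj_feasible_cong
          simp: slice_state_replace_slice[OF X x k] slice_input_replace_slice[OF U v k])
  qed
  thus ?thesis
    unfolding slices using X U by (simp add: replace_slice_carrier)
qed

lemma problem1_minimizer_slice_optimal:
  assumes A: "A \<in> carrier_mat n n" and B: "B \<in> carrier_mat n m"
    and C: "C \<in> carrier_mat p n" and D: "D \<in> carrier_mat p m" and N: "N > 0"
    and min: "problem1_minimizer A B C D s N X U" and i: "i < n"
    and u: "u \<in> carrier_vec (m * N)" and blocks: "\<And>t. t < N \<Longrightarrow> ublock m u t = slice_input n U i t"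
  shows "ol_optimal A B C D s N (unit_vec n i) u"
proof -
  note slices = problem1_feasible_iff_slices[OF A B C D N]
  note ol_traj = ol_feasible_iff_traj_feasible[OF A B unit_vec_carrier]
  have feas: "problem1_feasible A B C D s N X U"
    and opt: "\<And>X' U'. problem1_feasible A B C D s N X' U' \<Longrightarrow> mat_l1 U \<le> mat_l1 U'"
    using min by (auto simp: problem1_minimizer_def)
  have U: "U \<in> carrier_mat m (n * N)"
    and traj: "traj_feasible A B C D s N (unit_vec n i) (slice_state n N X i) (slice_input n U i)"
    using feas i unfolding slices by auto
  have dB: "dim_col B = m" using B by simp
  have "ol_feasible A B C D s N (unit_vec n i) u"
    unfolding ol_traj using u traj_feasible_ol_state[OF dB traj blocks] by simp
  moreover have "ol_cost m N u \<le> ol_cost m N u'" if u': "ol_feasible A B C D s N (unit_vec n i) u'" for u'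
  proof -
    define x' where "x' = ol_state A B (unit_vec n i) u'"
    define U' where "U' = replace_slice n i U (ublock m u')"
    have x': "x' t \<in> carrier_vec n" for t
      unfolding x'_def using A B by (rule ol_state_carrier) simp
    have "problem1_feasible A B C D s N (replace_slice n i X x') U'"
      unfolding U'_def x'_def using u' ol_state_carrier[OF A B]
      by (intro problem1_feasible_replace_slice[OF A B C D N feas i]) (auto simp: ol_traj)
    hence "mat_l1 U \<le> mat_l1 U'" by (rule opt)
    hence "(\<Sum>k<n. seq_cost m N (slice_input n U k)) \<le> (\<Sum>k<n. seq_cost m N (slice_input n U' k))"
      unfolding U'_def mat_l1_eq_sum_seq_cost[OF U] mat_l1_eq_sum_seq_cost[OF replace_slice_carrier[OF U]] .
    moreover have "seq_cost m N (slice_input n U' k) = seq_cost m N (slice_input n U k)"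
      if "k < n" "k \<noteq> i" for k
      using that U by (intro seq_cost_cong) (simp add: U'_def slice_input_replace_slice)
    ultimately have "seq_cost m N (slice_input n U i) \<le> seq_cost m N (slice_input n U' i)"
      using i by (simp add: sum.remove[of "{..<n}" i])
    also have "\<dots> = ol_cost m N u'"
      using U by (simp add: ol_cost_eq_seq_cost U'_def slice_input_replace_slice[OF U _ i] cong: seq_cost_cong)
    finally show ?thesis
      using blocks by (simp add: ol_cost_eq_seq_cost cong: seq_cost_cong)
  qed
  ultimately show ?thesis using dB by (simp add: ol_optimal_def)
qed

lemma cl_input_eq_col:
  assumes A: "A \<in> carrier_mat n n" and B: "B \<in> carrier_mat n m"
    and K: "K \<in> carrier_mat m n" and H: "H \<in> carrier_mat m r"
    and G: "G \<in> carrier_mat r n" and F: "F \<in> carrier_mat r r"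
    and X: "X \<in> carrier_mat n (n * N)" and Z: "Z \<in> carrier_mat r (n * N)"
    and plant: "A * X + B * (K * X + H * Z) = X * kron (shiftP N) (1\<^sub>m n)"
    and comp: "G * X + F * Z = Z * kron (shiftP N) (1\<^sub>m n)"
    and x0: "col X i = x0" and z0: "col Z i = 0\<^sub>v r" and i: "i < n" and t: "t < N"
  shows "cl_input A B K H G F x0 t = col (K * X + H * Z) (n * t + i)"
proof -
  have KXHZ: "K * X + H * Z \<in> carrier_mat m (n * N)" using K X H Z by auto
  have gain: "col (K * X + H * Z) j = H *\<^sub>v col Z j + K *\<^sub>v col X j" if "j < n * N" for j
    using that K X H Z
    by (simp add: col_add[OF mult_carrier_mat[OF K X] mult_carrier_mat[OF H Z]] col_mult2[OF K X]
        col_mult2[OF H Z] comm_add_vec[of _ m] del: col_mult)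
  have state: "cl_state A B K H G F x0 t = (col X (n * t + i), col Z (n * t + i))" if "t < N" for t
    using that
  proof (induction t)
    case 0
    show ?case using x0 z0 F by simp
  next
    case (Suc t)
    define j where "j = n * t + i"
    have j: "j < n * N" using Suc.prems mult_block_less_iff[OF i] by (simp add: j_def)
    have next_j: "j + n < n * N" "j + n = n * Suc t + i"
      using Suc.prems mult_block_less_iff[OF i, of "Suc t" N] by (simp_all add: j_def)
    have "col X (j + n) = col (X * kron (shiftP N) (1\<^sub>m n)) j"
      using col_mult_kron_shift[OF X j] next_j by simp
    also have "\<dots> = A *\<^sub>v col X j + B *\<^sub>v col (K * X + H * Z) j"
      unfolding plant[symmetric] using A B X KXHZ j
      by (simp add: col_add[OF mult_carrier_mat[OF A X] mult_carrier_mat[OF B KXHZ]]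
          col_mult2[OF A X] col_mult2[OF B KXHZ] del: col_mult)
    finally have "A *\<^sub>v col X j + B *\<^sub>v (H *\<^sub>v col Z j + K *\<^sub>v col X j) = col X (j + n)"
      using gain[OF j] by simp
    moreover have "col Z (j + n) = col (Z * kron (shiftP N) (1\<^sub>m n)) j"
      using col_mult_kron_shift[OF Z j] next_j by simp
    hence "F *\<^sub>v col Z j + G *\<^sub>v col X j = col Z (j + n)"
      unfolding comp[symmetric] using G X F Z j
      by (simp add: col_add[OF mult_carrier_mat[OF G X] mult_carrier_mat[OF F Z]]
          col_mult2[OF G X] col_mult2[OF F Z] comm_add_vec[of _ r] del: col_mult)
    ultimately show ?case
      using Suc.IH Suc.prems by (simp add: Let_def j_def add.commute add.left_commute)
  qed
  show ?thesis
    using state[OF t] gain mult_block_less_iff[OF i] t by (simp add: cl_input_def)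
qed

lemma ublock_cl_input_seq:
  assumes B: "dim_col B = m" and K: "dim_row K = m" and t: "t < N"
  shows "ublock m (cl_input_seq A B K H G F x0 N) t = cl_input A B K H G F x0 t"
proof (rule eq_vecI)
  show dim: "dim_vec (ublock m (cl_input_seq A B K H G F x0 N) t) = dim_vec (cl_input A B K H G F x0 t)"
    using K by (simp add: ublock_def cl_input_def)
  fix k assume "k < dim_vec (cl_input A B K H G F x0 t)"
  hence k: "k < m" using dim by (simp add: ublock_def)
  have "m * t + k < m * N" using mult_block_less_iff[OF k] t by simp
  thus "ublock m (cl_input_seq A B K H G F x0 N) t $ k = cl_input A B K H G F x0 t $ k"
    using k B by (simp add: ublock_def cl_input_seq_def)
qed

lemma col_Zmat_initial:
  assumes "k < n" "N > 0"
  shows "col (Zmat n N) k = 0\<^sub>v (n * (N - 1))"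
  using assms mult_block_less_iff[of k n 0 N] by (intro eq_vecI) (auto simp: Zmat_def)

theorem corollary1:
  fixes A B C D X U K H G F :: "real mat" and s :: "real vec" and n m p N i :: nat
  assumes A: "A \<in> carrier_mat n n" and B: "B \<in> carrier_mat n m"
    and C: "C \<in> carrier_mat p n" and D: "D \<in> carrier_mat p m"
    and s: "s \<in> carrier_vec p"
    and mn: "m \<le> n" and N2: "N \<ge> 2"
    and reach: "reachable A B"
    and Phi_rank: "vec_space.rank n (PhiN A B N) = n"
    and minimizer: "problem1_minimizer A B C D s N X U"
    and K: "K \<in> carrier_mat m n" and H: "H \<in> carrier_mat m (n * (N - 1))"
    and G: "G \<in> carrier_mat (n * (N - 1)) n" and F: "F \<in> carrier_mat (n * (N - 1)) (n * (N - 1))"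
    and eq1: "K * X + H * Zmat n N = U"
    and eq2: "G * X + F * Zmat n N = Vmat n N"
    and i: "i < n"
  shows "ol_optimal A B C D s N (unit_vec n i) (cl_input_seq A B K H G F (unit_vec n i) N)"
proof -
  have N: "N > 0" using N2 by simp
  have feas: "problem1_feasible A B C D s N X U"
    using minimizer by (simp add: problem1_minimizer_def)
  hence X: "X \<in> carrier_mat n (n * N)" and U: "U \<in> carrier_mat m (n * N)"
    and plant: "A * X + B * U = X * kron (shiftP N) (1\<^sub>m n)"
    using A B by (auto simp: problem1_feasible_def Let_def)
  have "traj_feasible A B C D s N (unit_vec n i) (slice_state n N X i) (slice_input n U i)"
    using feas i unfolding problem1_feasible_iff_slices[OF A B C D N] by auto
  hence x0: "col X i = unit_vec n i"
    using N by (simp add: traj_feasible_def slice_state_def)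
  have Z: "Zmat n N \<in> carrier_mat (n * (N - 1)) (n * N)" by (simp add: Zmat_def)
  have "ublock m (cl_input_seq A B K H G F (unit_vec n i) N) t = slice_input n U i t" if t: "t < N" for t
    using ublock_cl_input_seq[of B m K t N] B K t plant eq1 eq2
      cl_input_eq_col[OF A B K H G F X Z _ _ x0 col_Zmat_initial[OF i N] i t]
    by (simp add: Vmat_def slice_input_def)
  moreover have "cl_input_seq A B K H G F (unit_vec n i) N \<in> carrier_vec (m * N)"
    using B by (simp add: cl_input_seq_def)
  ultimately show ?thesis
    by (rule problem1_minimizer_slice_optimal[OF A B C D N minimizer i, rotated])
qed

end
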